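(* Let $\varphi$ be a rational self-map of $\mathbb{D}$ having order of contact $n$ (even) with $\partial\mathbb{D}$ at $\zeta$, let $\lambda=\varphi(\zeta)$, and let $\sigma$ be a branch of $\varphi_e^{-1}$ defined on a neighborhood of $\lambda$ with $\sigma(\lambda)=\zeta$. Then $\sigma$ has order of contact $n$ with $\partial\mathbb{D}$ at $\lambda$.
   Context: $\varphi_e=\rho\circ\varphi\circ\rho$ with $\rho(z)=1/\bar z$; since $\varphi_e$ maps $\{|z|>1\}$ into itself, $\varphi_e^{-1}(\mathbb{D})\subset\mathbb{D}$, so $\sigma$ maps points of $\mathbb{D}$ near $\lambda$ into $\mathbb{D}$. Order of contact $c$ of a map $\varphi$ (analytic on $V\cap\mathbb{D}$ for a neighborhood $V$ of $\zeta$, with values in $\mathbb{D}$) at $\zeta$: $\lim_{z\to\zeta}\varphi(z)=\varphi(\zeta)\in\partial\mathbb{D}$ exists and $\frac{1-|\varphi(e^{i\theta})|^2}{|\varphi(\zeta)-\varphi(e^{i\theta})|^c}$ is essentially bounded above and away from zero as $e^{i\theta}\to\zeta$. *)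

theory Defs
  imports "HOL-Analysis.Analysis" "HOL-Computational_Algebra.Polynomial"
begin

definition rat_fun :: "complex poly \<Rightarrow> complex poly \<Rightarrow> complex \<Rightarrow> complex" where
  "rat_fun p q z = poly p z / poly q z"

definition rational_selfmap :: "complex poly \<Rightarrow> complex poly \<Rightarrow> bool" where
  "rational_selfmap p q \<longleftrightarrow> q \<noteq> 0 \<and> coprime p q \<and>
     (\<forall>z\<in>ball 0 1. poly q z \<noteq> 0 \<and> rat_fun p q z \<in> ball 0 1)"

definition rho :: "complex \<Rightarrow> complex" where
  "rho z = 1 / cnj z"

definition ext_map :: "(complex \<Rightarrow> complex) \<Rightarrow> complex \<Rightarrow> complex" where
  "ext_map f = rho \<circ> f \<circ> rho"

definition order_of_contact :: "(complex \<Rightarrow> complex) \<Rightarrow> complex \<Rightarrow> real \<Rightarrow> bool" where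
  "order_of_contact f \<zeta> c \<longleftrightarrow>
     \<zeta> \<in> sphere 0 1 \<and>
     (\<exists>V. open V \<and> \<zeta> \<in> V \<and> f holomorphic_on (V \<inter> ball 0 1) \<and>
          f ` (V \<inter> ball 0 1) \<subseteq> ball 0 1) \<and>
     (f \<longlongrightarrow> f \<zeta>) (at \<zeta> within ball 0 1) \<and> f \<zeta> \<in> sphere 0 1 \<and>
     (\<exists>\<delta> A B. 0 < \<delta> \<and> 0 < A \<and> 0 < B \<and>
        (AE \<theta> in lborel. dist (cis \<theta>) \<zeta> < \<delta> \<longrightarrow>
           A \<le> (1 - (norm (f (cis \<theta>)))\<^sup>2) / (norm (f \<zeta> - f (cis \<theta>))) powr c \<and>
           (1 - (norm (f (cis \<theta>)))\<^sup>2) / (norm (f \<zeta> - f (cis \<theta>))) powr c \<le> B))"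

end

theory Submission
  imports Defs "HOL-Complex_Analysis.Cauchy_Integral_Formula"
begin

(* For w on the unit circle near \<lambda> = \<phi> \<zeta>, put s = \<sigma> w; then \<phi> maps the reflected point
   \<rho> s = s / |s|\<^sup>2 onto w. Since \<phi>'(\<zeta>) \<noteq> 0 and the angular derivative
   cnj \<lambda> * \<phi>'(\<zeta>) * \<zeta> is positive, comparing \<phi> at \<rho> s with \<phi> at the radial
   projection v = s / |s| shows that 1 - |\<phi> v| is comparable to |\<rho> s - v| = 1/|s| - 1, hence
   to 1 - |s|\<^sup>2. By the contact hypothesis, and because \<phi> is bi-Lipschitz near \<zeta>,
   1 - |\<phi> v| is also comparable to |v - \<zeta>|^n, and |v - \<zeta>| differs from |s - \<zeta>| by at
   most a multiple of 1/|s| - 1. The same hypothesis keeps the circle points v \<noteq> \<zeta> near \<zeta>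
   strictly inside the disc under \<phi>, which is why \<sigma> maps the disc into itself. *)

lemma holomorphic_deriv_approx:
  assumes hol: "f holomorphic_on S" and S: "open S" "z0 \<in> S" and e: "\<epsilon> > 0"
  obtains r where "r > 0" "ball z0 r \<subseteq> S"
    "\<And>x y. x \<in> ball z0 r \<Longrightarrow> y \<in> ball z0 r \<Longrightarrow>
       norm (f x - f y - deriv f z0 * (x - y)) \<le> \<epsilon> * norm (x - y)"
proof -
  have "isCont (deriv f) z0"
    using hol S by (meson continuous_on_eq_continuous_at holomorphic_deriv holomorphic_on_imp_continuous_on)
  then obtain d where d: "d > 0" "\<And>z. dist z z0 < d \<Longrightarrow> dist (deriv f z) (deriv f z0) < \<epsilon>"
    using e unfolding continuous_at_eps_delta by blast
  obtain r0 where r0: "r0 > 0" "ball z0 r0 \<subseteq> S" using S openE by blast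
  define r where "r = min d r0"
  have r: "r > 0" "ball z0 r \<subseteq> S" using d r0 by (auto simp: r_def)
  define g where "g z = f z - deriv f z0 * z" for z
  have "norm (g x - g y) \<le> \<epsilon> * norm (x - y)" if "x \<in> ball z0 r" "y \<in> ball z0 r" for x y
  proof (rule field_differentiable_bound[where f' = "\<lambda>z. deriv f z - deriv f z0"])
    fix z assume z: "z \<in> ball z0 r"
    then have "(f has_field_derivative deriv f z) (at z)"
      using hol S r by (meson holomorphic_derivI subsetD)
    then have "(g has_field_derivative deriv f z - deriv f z0 * 1) (at z)"
      unfolding g_def by (intro DERIV_diff DERIV_cmult DERIV_ident)
    then show "(g has_field_derivative deriv f z - deriv f z0) (at z within ball z0 r)"
      by (simp add: has_field_derivative_at_within)
    show "norm (deriv f z - deriv f z0) \<le> \<epsilon>"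
      using d(2)[of z] z by (simp add: r_def dist_norm norm_minus_commute)
  qed (use that \<open>\<epsilon> > 0\<close> in auto)
  then show ?thesis
    using r by (intro that[of r]) (auto simp: g_def algebra_simps)
qed

lemma holomorphic_locally_lipschitz:
  assumes "f holomorphic_on S" "open S" "z0 \<in> S"
  obtains r L where "r > 0" "L > 0" "ball z0 r \<subseteq> S"
    "\<And>x y. x \<in> ball z0 r \<Longrightarrow> y \<in> ball z0 r \<Longrightarrow> norm (f x - f y) \<le> L * norm (x - y)"
proof -
  obtain r where r: "r > 0" "ball z0 r \<subseteq> S"
    "\<And>x y. x \<in> ball z0 r \<Longrightarrow> y \<in> ball z0 r \<Longrightarrow>
       norm (f x - f y - deriv f z0 * (x - y)) \<le> 1 * norm (x - y)"
    using holomorphic_deriv_approx[OF assms zero_less_one] by blast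
  have "norm (f x - f y) \<le> (norm (deriv f z0) + 1) * norm (x - y)"
    if "x \<in> ball z0 r" "y \<in> ball z0 r" for x y
    using r(3)[OF that] norm_triangle_sub[of "f x - f y" "deriv f z0 * (x - y)"]
    unfolding norm_mult by (simp add: algebra_simps)
  moreover have "norm (deriv f z0) + 1 > 0"
    by (simp add: add_nonneg_pos)
  ultimately show ?thesis
    using r by (intro that[of r "norm (deriv f z0) + 1"]) auto
qed

lemma holomorphic_locally_expanding:
  assumes "f holomorphic_on S" "open S" "z0 \<in> S" "deriv f z0 \<noteq> 0"
  obtains r c where "r > 0" "c > 0" "ball z0 r \<subseteq> S"
    "\<And>x. x \<in> ball z0 r \<Longrightarrow> c * norm (x - z0) \<le> norm (f x - f z0)"
proof -
  define c where "c = norm (deriv f z0) / 2"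
  have c: "c > 0" using assms(4) by (simp add: c_def)
  obtain r where r: "r > 0" "ball z0 r \<subseteq> S"
    "\<And>x y. x \<in> ball z0 r \<Longrightarrow> y \<in> ball z0 r \<Longrightarrow>
       norm (f x - f y - deriv f z0 * (x - y)) \<le> c * norm (x - y)"
    using holomorphic_deriv_approx[OF assms(1-3) c] by blast
  have "c * norm (x - z0) \<le> norm (f x - f z0)" if "x \<in> ball z0 r" for x
    using r(3)[OF that, of z0] r(1) norm_triangle_ineq3[of "f x - f z0" "deriv f z0 * (x - z0)"]
    by (simp add: norm_mult c_def norm_minus_commute)
  with r c show ?thesis
    by (intro that[of r c]) auto
qed

lemma rho_rho [simp]: "rho (rho z) = z"
  by (simp add: rho_def)

lemma norm_rho: "norm (rho z) = 1 / norm z"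
  by (simp add: rho_def norm_divide)

lemma rho_eq_self_on_circle:
  assumes "norm z = 1"
  shows "rho z = z"
proof -
  have "z * cnj z = 1"
    using complex_norm_square[of z] assms by simp
  then show ?thesis
    using assms by (simp add: rho_def divide_eq_eq mult.commute)
qed

lemma norm_rho_diff:
  assumes "a \<noteq> 0" "b \<noteq> 0"
  shows "norm (rho a - rho b) = norm (a - b) / (norm a * norm b)"
proof -
  have "rho a - rho b = cnj (b - a) / (cnj a * cnj b)"
    using assms by (simp add: rho_def field_simps)
  then have "norm (rho a - rho b) = norm (cnj (b - a)) / (norm (cnj a) * norm (cnj b))"
    by (simp only: norm_divide norm_mult)
  then show ?thesis
    by (simp only: complex_mod_cnj norm_minus_commute[of b a])
qed

lemma rational_selfmap_denominator_nonzero: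
  assumes sm: "rational_selfmap p q" and z: "z \<in> cball 0 1"
  shows "poly q z \<noteq> 0"
proof
  assume q0: "poly q z = 0"
  have "ball 0 1 \<subseteq> {z. norm (poly p z) \<le> norm (poly q z)}"
    using sm by (auto simp: rational_selfmap_def rat_fun_def norm_divide divide_less_eq)
  moreover have "closed {z. norm (poly p z) \<le> norm (poly q z)}"
    by (intro closed_Collect_le continuous_intros)
  ultimately have "cball 0 1 \<subseteq> {z. norm (poly p z) \<le> norm (poly q z)}"
    using closure_minimal closure_ball by (metis zero_less_one)
  with z q0 have "poly p z = 0"
    by auto
  with q0 have "[:-z, 1:] dvd p" "[:-z, 1:] dvd q"
    by (simp_all add: poly_eq_0_iff_dvd)
  then have "is_unit [:-z, 1:]"
    using sm coprime_common_divisor by (auto simp: rational_selfmap_def)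
  then show False
    using is_unit_iff_degree[of "[:-z, 1:]"] by simp
qed

lemma inward_test_direction:
  fixes h s :: real
  assumes h: "0 < h" "h \<le> 1 / 2" and s: "s = 1 \<or> s = -1"
  shows "norm (Complex (- h\<^sup>2) (s * h)) \<le> 2 * h" "norm (1 + Complex (- h\<^sup>2) (s * h)) < 1"
proof -
  have "h * h \<le> h * (1 / 2)"
    using h by (intro mult_left_mono) auto
  then have hh: "h * h < 1"
    using h(2) by linarith
  have s2: "s\<^sup>2 = 1"
    using s by auto
  have "norm (Complex (- h\<^sup>2) (s * h)) = sqrt (h\<^sup>2 * h\<^sup>2 + h\<^sup>2)"
    using s2 by (simp add: cmod_def power_mult_distrib power2_eq_square)
  also have "\<dots> \<le> sqrt ((2 * h)\<^sup>2)"
    using hh h(1) mult_left_mono[of "h * h" 1 "h * h"] by (intro real_sqrt_le_mono) (simp add: power2_eq_square)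
  also have "\<dots> = 2 * h"
    using h(1) by (simp only: real_sqrt_abs)
  finally show "norm (Complex (- h\<^sup>2) (s * h)) \<le> 2 * h" .
  have "(h * h) * (h * h) < (h * h) * 1"
    using h(1) hh by (intro mult_strict_left_mono) auto
  then have "(1 - h\<^sup>2)\<^sup>2 + h\<^sup>2 < 1"
    by (simp add: power2_eq_square algebra_simps)
  then show "norm (1 + Complex (- h\<^sup>2) (s * h)) < 1"
    using s2 by (simp add: cmod_def power_mult_distrib)
qed

lemma Re_nonneg_if_Re_mult_le:
  fixes K :: complex
  assumes small: "\<And>\<epsilon>. \<epsilon> > 0 \<Longrightarrow> \<exists>r>0. \<forall>\<omega>. norm \<omega> < r \<longrightarrow> norm (1 + \<omega>) < 1 \<longrightarrow>
                    Re (K * \<omega>) \<le> \<epsilon> * norm \<omega>"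
  shows "Re K \<ge> 0"
proof -
  have "- Re K \<le> 0 + \<epsilon>" if \<epsilon>: "\<epsilon> > 0" for \<epsilon>
  proof -
    obtain r where r: "r > 0" "\<And>\<omega>. norm \<omega> < r \<Longrightarrow> norm (1 + \<omega>) < 1 \<Longrightarrow> Re (K * \<omega>) \<le> \<epsilon> * norm \<omega>"
      using small[OF \<epsilon>] by blast
    define h where "h = min r 1 / 2"
    have h: "0 < h" "h < r" "h < 1"
      using r(1) by (auto simp: h_def)
    have "(1 + of_real (- h) :: complex) = of_real (1 - h)"
      by simp
    then have "norm (1 + of_real (- h) :: complex) < 1"
      using h by (simp only: norm_of_real)
    then have "Re (K * of_real (- h)) \<le> \<epsilon> * norm (of_real (- h) :: complex)"
      using h by (intro r(2)) auto
    then have "h * (- Re K) \<le> h * \<epsilon>"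
      using h by (simp add: mult.commute)
    then show ?thesis
      using mult_left_le_imp_le[OF _ h(1)] by simp
  qed
  then have "- Re K \<le> 0"
    by (rule field_le_epsilon)
  then show ?thesis
    by simp
qed

lemma Im_eq_0_if_Re_mult_le:
  fixes K :: complex
  assumes small: "\<And>\<epsilon>. \<epsilon> > 0 \<Longrightarrow> \<exists>r>0. \<forall>\<omega>. norm \<omega> < r \<longrightarrow> norm (1 + \<omega>) < 1 \<longrightarrow>
                    Re (K * \<omega>) \<le> \<epsilon> * norm \<omega>"
  shows "Im K = 0"
proof -
  have Re: "Re K \<ge> 0"
    using small by (rule Re_nonneg_if_Re_mult_le)
  \<comment> \<open>The directions \<open>-h\<^sup>2 \<plusminus> i h\<close> point into the disc and become tangent to the circle as \<open>h \<rightarrow> 0\<close>.\<close>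
  have Im_bound: "- s * Im K \<le> 3 * \<epsilon>" if \<epsilon>: "\<epsilon> > 0" and s: "s = 1 \<or> s = -1" for \<epsilon> s :: real
  proof -
    obtain r where r: "r > 0" "\<And>\<omega>. norm \<omega> < r \<Longrightarrow> norm (1 + \<omega>) < 1 \<Longrightarrow> Re (K * \<omega>) \<le> \<epsilon> * norm \<omega>"
      using small[OF \<epsilon>] by blast
    define h where "h = min (min (r / 3) (1 / 2)) (\<epsilon> / (Re K + 1))"
    have "h \<le> min (r / 3) (1 / 2)"
      unfolding h_def by (rule min.cobounded1)
    then have h: "0 < h" "h \<le> r / 3" "h \<le> 1 / 2"
      using r(1) \<epsilon> Re by (auto simp: h_def)
    have "h * Re K \<le> \<epsilon> / (Re K + 1) * Re K"
      using Re by (intro mult_right_mono) (auto simp: h_def)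
    also have "\<dots> \<le> \<epsilon>"
      using Re \<epsilon> by (simp add: field_simps)
    finally have hK: "h * Re K \<le> \<epsilon>" .
    define \<omega> where "\<omega> = Complex (- h\<^sup>2) (s * h)"
    note \<omega> = inward_test_direction[OF h(1,3) s, folded \<omega>_def]
    have "Re (K * \<omega>) \<le> \<epsilon> * norm \<omega>"
      using \<omega> h by (intro r(2)) auto
    also have "\<dots> \<le> \<epsilon> * (2 * h)"
      using \<omega>(1) \<epsilon> by (intro mult_left_mono) auto
    finally have "h * (- s * Im K) \<le> h * (2 * \<epsilon> + h * Re K)"
      by (simp add: \<omega>_def algebra_simps power2_eq_square)
    then have "- s * Im K \<le> 2 * \<epsilon> + h * Re K"
      by (rule mult_left_le_imp_le[OF _ h(1)])
    with hK show ?thesis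
      by simp
  qed
  have "- s * Im K \<le> 0" if "s = 1 \<or> s = -1" for s :: real
  proof (rule field_le_epsilon)
    fix e :: real assume "e > 0"
    then show "- s * Im K \<le> 0 + e"
      using Im_bound[of "e / 3" s] that by simp
  qed
  from this[of 1] this[of "-1"] show "Im K = 0"
    by simp
qed

lemma boundary_angular_derivative_real_nonneg:
  fixes f :: "complex \<Rightarrow> complex"
  assumes hol: "f holomorphic_on S" "open S" "\<zeta> \<in> S"
    and \<zeta>: "norm \<zeta> = 1" and f\<zeta>: "norm (f \<zeta>) = 1"
    and inside: "\<And>z. z \<in> ball 0 1 \<Longrightarrow> z \<in> S \<Longrightarrow> norm (f z) < 1"
  shows "Re (cnj (f \<zeta>) * deriv f \<zeta> * \<zeta>) \<ge> 0" "Im (cnj (f \<zeta>) * deriv f \<zeta> * \<zeta>) = 0"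
proof -
  have unit: "cnj (f \<zeta>) * f \<zeta> = 1"
    using complex_norm_square[of "f \<zeta>"] f\<zeta> by (simp add: mult.commute)
  have small: "\<exists>r>0. \<forall>\<omega>. norm \<omega> < r \<longrightarrow> norm (1 + \<omega>) < 1 \<longrightarrow>
          Re (cnj (f \<zeta>) * deriv f \<zeta> * \<zeta> * \<omega>) \<le> \<epsilon> * norm \<omega>" if \<epsilon>: "\<epsilon> > 0" for \<epsilon>
  proof -
    obtain r where r: "r > 0" "ball \<zeta> r \<subseteq> S"
      "\<And>x y. x \<in> ball \<zeta> r \<Longrightarrow> y \<in> ball \<zeta> r \<Longrightarrow>
         norm (f x - f y - deriv f \<zeta> * (x - y)) \<le> \<epsilon> * norm (x - y)"
      using holomorphic_deriv_approx[OF hol \<epsilon>] by blast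
    have "Re (cnj (f \<zeta>) * deriv f \<zeta> * \<zeta> * \<omega>) \<le> \<epsilon> * norm \<omega>"
      if \<omega>: "norm \<omega> < r" "norm (1 + \<omega>) < 1" for \<omega>
    proof -
      define x where "x = \<zeta> * (1 + \<omega>)"
      have x\<zeta>: "x - \<zeta> = \<zeta> * \<omega>"
        by (simp add: x_def algebra_simps)
      then have nx: "norm (x - \<zeta>) = norm \<omega>"
        using \<zeta> by (simp add: norm_mult)
      have x: "x \<in> ball \<zeta> r" "x \<in> ball 0 1"
        using nx \<omega> \<zeta> by (auto simp: dist_norm norm_minus_commute x_def norm_mult)
      define E where "E = f x - f \<zeta> - deriv f \<zeta> * (x - \<zeta>)"
      have E: "norm E \<le> \<epsilon> * norm \<omega>"
        using r(3)[OF x(1), of \<zeta>] r(1) nx by (simp add: E_def)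
      have "cnj (f \<zeta>) * f x = 1 + cnj (f \<zeta>) * deriv f \<zeta> * \<zeta> * \<omega> + cnj (f \<zeta>) * E"
        using unit by (simp add: E_def x\<zeta> algebra_simps)
      moreover have "Re (cnj (f \<zeta>) * f x) < 1"
        using complex_Re_le_cmod[of "cnj (f \<zeta>) * f x"] inside[OF x(2)] x(1) r(2) f\<zeta>
        by (auto simp: norm_mult)
      moreover have "- Re (cnj (f \<zeta>) * E) \<le> norm E"
        using abs_Re_le_cmod[of "cnj (f \<zeta>) * E"] f\<zeta> by (simp add: norm_mult)
      ultimately show ?thesis
        using E by simp
    qed
    with r(1) show ?thesis
      by blast
  qed
  show "Re (cnj (f \<zeta>) * deriv f \<zeta> * \<zeta>) \<ge> 0"
    by (rule Re_nonneg_if_Re_mult_le[OF small])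
  show "Im (cnj (f \<zeta>) * deriv f \<zeta> * \<zeta>) = 0"
    by (rule Im_eq_0_if_Re_mult_le[OF small])
qed

lemma deriv_nonzero_of_reflected_branch:
  fixes f \<sigma> :: "complex \<Rightarrow> complex"
  assumes hol: "f holomorphic_on S" "open S" "\<zeta> \<in> S"
    and \<zeta>: "norm \<zeta> = 1" and f\<zeta>: "norm (f \<zeta>) = 1"
    and \<sigma>: "\<sigma> holomorphic_on U" "open U" "f \<zeta> \<in> U" and \<sigma>\<zeta>: "\<sigma> (f \<zeta>) = \<zeta>"
    and inv: "\<And>w. w \<in> U \<Longrightarrow> f (rho (\<sigma> w)) = rho w"
  shows "deriv f \<zeta> \<noteq> 0"
proof
  \<comment> \<open>If \<open>f'(\<zeta>) = 0\<close>, then \<open>f \<circ> rho \<circ> \<sigma>\<close> moves points near \<open>f \<zeta>\<close> by \<open>o(h)\<close>,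
      whereas \<open>rho\<close> moves \<open>w = (1 + h) f \<zeta>\<close> by about \<open>h\<close>.\<close>
  assume D0: "deriv f \<zeta> = 0"
  define l where "l = f \<zeta>"
  obtain r1 M where r1: "r1 > 0" "M > 0" "ball l r1 \<subseteq> U"
    and M: "\<And>x y. x \<in> ball l r1 \<Longrightarrow> y \<in> ball l r1 \<Longrightarrow> norm (\<sigma> x - \<sigma> y) \<le> M * norm (x - y)"
    using holomorphic_locally_lipschitz[OF \<sigma>] unfolding l_def by blast
  have "1 / (8 * M) > 0"
    using r1 by simp
  then obtain r2 where r2: "r2 > 0" "ball \<zeta> r2 \<subseteq> S"
    "\<And>x. x \<in> ball \<zeta> r2 \<Longrightarrow> norm (f x - l) \<le> 1 / (8 * M) * norm (x - \<zeta>)"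
    using holomorphic_deriv_approx[OF hol] D0 unfolding l_def by (metis centre_in_ball diff_zero mult_zero_left)
  define m where "m = min (min r1 1) (min (r2 / (2 * M)) (1 / (8 * M)))"
  have m: "0 < m" "m \<le> r1" "m \<le> 1" "m * (2 * M) \<le> r2" "m * (8 * M) \<le> 1"
    using r1 r2 by (auto simp: m_def min_le_iff_disj simp flip: pos_le_divide_eq)
  define h where "h = m / 2"
  have h: "0 < h" "h < r1" "h \<le> 1" "M * h * 2 < r2" "M * h \<le> 1 / 8"
    using m r2(1) by (auto simp: h_def algebra_simps)
  define w where "w = l * (1 + of_real h)"
  have l1: "norm l = 1"
    using f\<zeta> by (simp add: l_def)
  have "w - l = l * of_real h"
    by (simp add: w_def algebra_simps)
  then have nwl: "norm (w - l) = h"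
    using h l1 by (simp add: norm_mult)
  have "norm (1 + of_real h :: complex) = 1 + h"
    using norm_of_real[of "1 + h"] h by simp
  then have nw: "norm w = 1 + h"
    using l1 by (simp add: w_def norm_mult)
  have wl0: "w \<noteq> 0" "l \<noteq> 0"
    using nw l1 h by auto
  have w: "w \<in> ball l r1"
    using nwl h by (simp add: dist_norm norm_minus_commute)
  define s where "s = \<sigma> w"
  have s\<zeta>: "norm (s - \<zeta>) \<le> M * h"
    using M[OF w, of l] r1(1) nwl \<sigma>\<zeta> by (simp add: s_def l_def)
  have s: "norm s \<ge> 7 / 8"
    using norm_triangle_ineq2[of \<zeta> s] \<zeta> s\<zeta> h norm_minus_commute[of s \<zeta>] by linarith
  define x where "x = rho s"
  have "s \<noteq> 0" "\<zeta> \<noteq> 0"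
    using s \<zeta> by auto
  then have "norm (x - \<zeta>) = norm (s - \<zeta>) / norm s"
    using norm_rho_diff[of s \<zeta>] rho_eq_self_on_circle[OF \<zeta>] \<zeta> by (simp add: x_def)
  also have "\<dots> \<le> (M * h) / (7 / 8)"
    using s\<zeta> s h(1) r1(2) by (intro frac_le) auto
  also have "\<dots> = M * h * (8 / 7)"
    by simp
  also have "\<dots> \<le> M * h * 2"
    using r1(2) h(1) by (intro mult_left_mono) auto
  finally have x\<zeta>: "norm (x - \<zeta>) \<le> M * h * 2" .
  then have "x \<in> ball \<zeta> r2"
    using h(4) by (simp add: dist_norm norm_minus_commute)
  then have "norm (f x - l) \<le> 1 / (8 * M) * norm (x - \<zeta>)"
    by (rule r2(3))
  also have "\<dots> \<le> 1 / (8 * M) * (M * h * 2)"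
    using x\<zeta> r1(2) by (intro mult_left_mono) auto
  also have "\<dots> = h / 4"
    using r1(2) by simp
  finally have "norm (f x - l) \<le> h / 4" .
  moreover have "f x = rho w"
    using inv[of w] w r1(3) by (auto simp: x_def s_def)
  moreover have "norm (rho w - rho l) = h / (1 + h)"
    using norm_rho_diff[of w l] nwl nw l1 wl0 by simp
  moreover have "h / 2 \<le> h / (1 + h)"
    using h by (simp add: field_simps)
  ultimately show False
    using rho_eq_self_on_circle[OF l1] h by simp
qed

lemma AE_lborel_continuous_imp_mem_closed:
  fixes g :: "real \<Rightarrow> 'a::topological_space"
  assumes ae: "AE t in lborel. P t \<longrightarrow> g t \<in> C" and C: "closed C"
    and g: "isCont g x" and P: "eventually P (at x)"
  shows "g x \<in> C"
proof (rule ccontr)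
  assume "g x \<notin> C"
  then have "eventually (\<lambda>t. g t \<in> - C) (at x)"
    using g C unfolding isCont_def by (intro topological_tendstoD) auto
  with P have "eventually (\<lambda>t. \<not> (P t \<longrightarrow> g t \<in> C)) (at x)"
    by (rule eventually_elim2) auto
  then obtain d where d: "d > 0" "\<And>t. t \<noteq> x \<Longrightarrow> dist t x < d \<Longrightarrow> \<not> (P t \<longrightarrow> g t \<in> C)"
    unfolding eventually_at by auto
  obtain N where N: "{t \<in> space lborel. \<not> (P t \<longrightarrow> g t \<in> C)} \<subseteq> N" "emeasure lborel N = 0"
    "N \<in> sets lborel"
    using ae by (rule AE_E)
  have "{x <..< x + d} \<subseteq> N"
    using d N(1) by (auto simp: dist_real_def)
  then have "emeasure lborel {x <..< x + d} \<le> emeasure lborel N"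
    using N(3) by (rule emeasure_mono)
  then show False
    using N(2) d(1) by simp
qed

lemma AE_lborel_cis_neq: "AE \<theta> in lborel. cis \<theta> \<noteq> l"
proof (cases "\<exists>a. cis a = l")
  case False
  then show ?thesis by simp
next
  case True
  then obtain a where a: "cis a = l" by blast
  have "{\<theta>. cis \<theta> = l} \<subseteq> range (\<lambda>n::int. a + of_int n * 2 * pi)"
  proof
    fix \<theta> assume "\<theta> \<in> {\<theta>. cis \<theta> = l}"
    then have "cis (\<theta> - a) = 1"
      using a cis_divide[of \<theta> a] by (auto simp: cis_neq_zero)
    then have "cos (\<theta> - a) = 1"
      by (metis cis.sel(1) one_complex.sel(1))
    then obtain n :: int where "\<theta> - a = of_int n * 2 * pi"
      using cos_one_2pi_int by blast
    then show "\<theta> \<in> range (\<lambda>n::int. a + of_int n * 2 * pi)"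
      by (intro image_eqI[of _ _ n]) auto
  qed
  then have "countable {\<theta>. cis \<theta> = l}"
    by (rule countable_subset) auto
  then have "{\<theta>. cis \<theta> = l} \<in> null_sets lborel"
    by (rule countable_imp_null_set_lborel)
  then show ?thesis
    by (rule AE_not_in[THEN AE_mp]) auto
qed

lemma exists_circle_point_near:
  fixes \<zeta> :: complex
  assumes \<zeta>: "norm \<zeta> = 1" and e: "\<eta> > 0"
  obtains v where "norm v = 1" "v \<noteq> \<zeta>" "norm (v - \<zeta>) < \<eta>"
proof -
  have "continuous_on UNIV cis"
    by (intro continuous_intros)
  then have "isCont cis 0"
    by (simp add: continuous_on_eq_continuous_at)
  then obtain d where d: "d > 0" "\<And>x. dist x 0 < d \<Longrightarrow> dist (cis x) (cis 0) < \<eta>"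
    using e unfolding continuous_at_eps_delta by blast
  define h where "h = min d 1 / 2"
  have h: "0 < h" "h < d" "h < pi"
    using d pi_gt3 by (auto simp: h_def)
  have "Im (cis h) \<noteq> Im 1"
    using h sin_gt_zero[of h] by simp
  then have "cis h \<noteq> 1"
    by metis
  moreover have "\<zeta> * cis h - \<zeta> = \<zeta> * (cis h - 1)"
    by (simp add: algebra_simps)
  then have "norm (\<zeta> * cis h - \<zeta>) = norm (cis h - 1)"
    using \<zeta> by (simp add: norm_mult)
  ultimately show ?thesis
    using d(2)[of h] h \<zeta> by (intro that[of "\<zeta> * cis h"]) (auto simp: dist_norm norm_mult)
qed

lemma radial_projection:
  fixes s :: complex
  assumes "1 / 2 < norm s" "norm s < 1"
  defines "t \<equiv> 1 / norm s - 1"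
  shows "rho s - sgn s = of_real t * sgn s"
    and "0 < t" "t \<le> 1" "t / 2 \<le> 1 - (norm s)\<^sup>2" "1 - (norm s)\<^sup>2 \<le> 2 * t"
proof -
  define m where "m = norm s"
  have m: "1 / 2 < m" "m < 1"
    using assms by (simp_all add: m_def)
  have s0: "s \<noteq> 0"
  proof
    assume "s = 0"
    with assms(1) show False by simp
  qed
  have "rho s = s / (s * cnj s)"
    using s0 by (simp add: rho_def)
  also have "\<dots> = sgn s * of_real (1 / m)"
    using s0 by (simp add: complex_norm_square[symmetric] sgn_eq m_def power2_eq_square field_simps)
  finally show "rho s - sgn s = of_real t * sgn s"
    by (simp add: t_def m_def algebra_simps)
  have tm: "m * t = 1 - m"
    using s0 by (simp add: t_def m_def field_simps)
  have t_eq: "t = (1 - m) / m"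
    using s0 by (simp add: t_def m_def field_simps)
  show "0 < t" "t \<le> 1"
    using m by (simp_all add: t_eq pos_divide_le_eq)
  have "m * (1 + m) * t = (1 + m) * (m * t)"
    by (simp add: algebra_simps)
  also have "\<dots> = 1 - m\<^sup>2"
    by (simp add: tm power2_eq_square algebra_simps)
  finally have sq: "1 - m\<^sup>2 = m * (1 + m) * t" ..
  have "1 / 2 \<le> m * (1 + m)" "m * (1 + m) \<le> 2"
    using m mult_strict_mono[of m 1 "1 + m" 2] mult_strict_mono[of "1/2" m 1 "1 + m"] by auto
  then show "t / 2 \<le> 1 - (norm s)\<^sup>2" "1 - (norm s)\<^sup>2 \<le> 2 * t"
    using \<open>0 < t\<close> mult_right_mono[of "1/2" "m * (1 + m)" t] mult_right_mono[of "m * (1 + m)" 2 t]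
    by (simp_all add: sq flip: m_def)
qed

lemma radial_projection_dist:
  fixes s \<zeta> :: complex
  assumes \<zeta>: "norm \<zeta> = 1" and s: "1 / 2 < norm s" "norm s < 1"
  defines "t \<equiv> 1 / norm s - 1"
  shows "norm (sgn s - \<zeta>) \<le> 2 * norm (s - \<zeta>)"
    and "norm (s - \<zeta>) \<le> norm (sgn s - \<zeta>) + t"
    and "norm (rho s - \<zeta>) \<le> 4 * norm (s - \<zeta>)"
proof -
  have s0: "s \<noteq> 0"
    using s by auto
  have "sgn s - s = of_real (1 - norm s) * sgn s"
    using s0 by (simp add: sgn_eq field_simps)
  then have "norm (sgn s - s) = \<bar>1 - norm s\<bar> * norm (sgn s)"
    by (simp only: norm_mult norm_of_real)
  then have n_sgn: "norm (sgn s - s) = 1 - norm s"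
    using s s0 by (simp add: norm_sgn)
  have gap: "1 - norm s \<le> norm (s - \<zeta>)"
    using norm_triangle_ineq2[of \<zeta> s] \<zeta> by (simp add: norm_minus_commute)
  have "norm (rho s - sgn s) = \<bar>t\<bar> * norm (sgn s)"
    unfolding t_def using radial_projection(1)[OF s] by (simp only: norm_mult norm_of_real)
  then have n_rho: "norm (rho s - sgn s) = t"
    using radial_projection(2)[OF s] s0 by (simp add: norm_sgn t_def)
  show sgn_dist: "norm (sgn s - \<zeta>) \<le> 2 * norm (s - \<zeta>)"
    using norm_triangle_ineq[of "sgn s - s" "s - \<zeta>"] n_sgn gap by simp
  have tm: "1 - norm s = norm s * t"
    using s0 by (simp add: t_def field_simps)
  have t: "0 < t"
    using radial_projection(2)[OF s] by (simp add: t_def)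
  have "norm s * t \<le> 1 * t" "t * (1 / 2) \<le> t * norm s"
    using s t by (intro mult_right_mono mult_left_mono; simp)+
  then have t_bounds: "1 - norm s \<le> t" "t \<le> 2 * (1 - norm s)"
    using tm by (simp_all add: mult.commute)
  show "norm (s - \<zeta>) \<le> norm (sgn s - \<zeta>) + t"
    using norm_triangle_ineq[of "s - sgn s" "sgn s - \<zeta>"] n_sgn t_bounds
    by (simp add: norm_minus_commute)
  show "norm (rho s - \<zeta>) \<le> 4 * norm (s - \<zeta>)"
    using norm_triangle_ineq[of "rho s - sgn s" "sgn s - \<zeta>"] n_rho sgn_dist gap t_bounds by simp
qed

lemma power_le_of_le_add:
  fixes a t d K :: real
  assumes "0 \<le> a" "0 < t" "t \<le> 1" "0 \<le> d" "d \<le> a + t" "a ^ n \<le> K * t" "n \<ge> 1"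
  shows "d ^ n \<le> 2 ^ n * (K + 1) * t"
proof -
  have "d ^ n \<le> (2 * max a t) ^ n"
    using assms by (intro power_mono) auto
  also have "\<dots> = 2 ^ n * max a t ^ n"
    by (simp add: power_mult_distrib)
  also have "max a t ^ n \<le> a ^ n + t ^ n"
    using assms by (cases "a \<le> t") (auto simp: max_def)
  also have "t ^ n \<le> t"
    using assms power_decreasing[of 1 n t] by simp
  also have "a ^ n \<le> K * t"
    by (rule assms(6))
  finally show ?thesis
    by (simp add: algebra_simps)
qed

lemma one_minus_square_bounds:
  fixes x :: real
  assumes "0 \<le> x" "x \<le> 1"
  shows "1 - x \<le> 1 - x\<^sup>2" "1 - x\<^sup>2 \<le> 2 * (1 - x)"
  using assms mult_left_le_one_le[of x x] zero_le_power2[of "1 - x"]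
  by (simp_all add: power2_eq_square algebra_simps)

lemma Re_cnj_growth_bound:
  fixes a b w :: complex
  assumes b: "norm b = 1" and a: "norm a \<le> 1"
    and approx: "norm (b - a - of_real t * w) \<le> \<epsilon> * t" and t: "0 \<le> t"
  shows "t * (Re (cnj a * w) - \<epsilon>) \<le> 1 - norm a"
proof -
  define E where "E = b - a - of_real t * w"
  have "Re (cnj a * (b - a)) = t * Re (cnj a * w) + Re (cnj a * E)"
    by (simp add: E_def algebra_simps)
  moreover have "Re (cnj a * b) \<le> norm a"
    using complex_Re_le_cmod[of "cnj a * b"] b by (simp add: norm_mult)
  moreover have "Re (cnj a * a) = (norm a)\<^sup>2"
    using complex_norm_square[of a] by (metis Re_complex_of_real mult.commute)
  moreover have "norm a - (norm a)\<^sup>2 \<le> 1 - norm a"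
    using zero_le_power2[of "1 - norm a"] by (simp add: power2_eq_square algebra_simps)
  moreover have "- Re (cnj a * E) \<le> \<epsilon> * t"
    using abs_Re_le_cmod[of "cnj a * E"] approx a mult_left_le_one_le[of "norm E" "norm a"]
    by (simp add: E_def norm_mult)
  ultimately show ?thesis
    by (simp add: algebra_simps)
qed

locale reflected_branch =
  fixes \<phi> \<sigma> :: "complex \<Rightarrow> complex" and S U :: "complex set" and \<zeta> :: complex
  assumes holo: "\<phi> holomorphic_on S" and open_S: "open S" and cball_S: "cball 0 1 \<subseteq> S"
    and maps_disc: "\<phi> ` ball 0 1 \<subseteq> ball 0 1"
    and on_circle: "norm \<zeta> = 1" "norm (\<phi> \<zeta>) = 1"
    and branch_holo: "\<sigma> holomorphic_on U" and open_U: "open U" and in_U: "\<phi> \<zeta> \<in> U"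
    and branch_at: "\<sigma> (\<phi> \<zeta>) = \<zeta>"
    and branch_inverse: "\<And>w. w \<in> U \<Longrightarrow> \<phi> (rho (\<sigma> w)) = rho w"
    \<comment> \<open>\<open>ext_map \<phi> (\<sigma> w) = w\<close> with \<open>rho\<close> applied to both sides\<close>
begin

lemma in_S: "\<zeta> \<in> S"
  using cball_S on_circle by auto

lemma norm_le_1_on_cball:
  assumes "z \<in> cball 0 1"
  shows "norm (\<phi> z) \<le> 1"
proof -
  have "continuous_on (closure (ball 0 1)) \<phi>"
    using holomorphic_on_imp_continuous_on[OF holo] cball_S by (simp add: continuous_on_subset)
  then have "\<phi> ` closure (ball 0 1) \<subseteq> cball 0 1"
    using maps_disc by (intro image_closure_subset) auto
  with assms show ?thesis
    unfolding image_subset_iff by auto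
qed

lemma deriv_nonzero: "deriv \<phi> \<zeta> \<noteq> 0"
  using deriv_nonzero_of_reflected_branch[OF holo open_S in_S on_circle branch_holo open_U in_U
      branch_at branch_inverse] .

lemma angular_derivative_pos: "Re (cnj (\<phi> \<zeta>) * deriv \<phi> \<zeta> * \<zeta>) > 0"
proof -
  have "\<And>z. z \<in> ball 0 1 \<Longrightarrow> z \<in> S \<Longrightarrow> norm (\<phi> z) < 1"
    using maps_disc by (auto simp: image_subset_iff)
  note nonneg = boundary_angular_derivative_real_nonneg[OF holo open_S in_S on_circle this]
  have "cnj (\<phi> \<zeta>) * deriv \<phi> \<zeta> * \<zeta> \<noteq> 0"
    using deriv_nonzero on_circle by auto
  with nonneg show ?thesis
    by (metis complex_eq_iff order_le_less zero_complex.sel)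
qed

lemma branch_near:
  assumes "\<rho> > 0"
  obtains r where "r > 0" "r \<le> 1" "ball (\<phi> \<zeta>) r \<subseteq> U" "\<And>w. w \<in> ball (\<phi> \<zeta>) r \<Longrightarrow> norm (\<sigma> w - \<zeta>) < \<rho>"
proof -
  have "isCont \<sigma> (\<phi> \<zeta>)"
    using holomorphic_on_imp_continuous_on[OF branch_holo] open_U in_U continuous_on_eq_continuous_at by blast
  then obtain r0 where r0: "r0 > 0" "\<And>w. dist w (\<phi> \<zeta>) < r0 \<Longrightarrow> dist (\<sigma> w) \<zeta> < \<rho>"
    using assms branch_at unfolding continuous_at_eps_delta by metis
  obtain r1 where r1: "r1 > 0" "ball (\<phi> \<zeta>) r1 \<subseteq> U"
    using open_U in_U openE by blast
  show ?thesis
    using r0 r1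
    by (intro that[of "min (min r0 r1) 1"]) (auto simp: dist_norm norm_minus_commute)
qed

lemma angular_derivative_near:
  obtains r where "r > 0"
    "\<And>z. dist z \<zeta> < r \<Longrightarrow>
       Re (cnj (\<phi> \<zeta>) * deriv \<phi> \<zeta> * \<zeta>) / 2 < Re (cnj (\<phi> z) * deriv \<phi> \<zeta> * z)"
proof -
  define \<kappa> where "\<kappa> = Re (cnj (\<phi> \<zeta>) * deriv \<phi> \<zeta> * \<zeta>)"
  have "isCont \<phi> \<zeta>"
    using holomorphic_on_imp_continuous_on[OF holo] open_S in_S continuous_on_eq_continuous_at by blast
  then have "isCont (\<lambda>z. Re (cnj (\<phi> z) * deriv \<phi> \<zeta> * z)) \<zeta>"
    by (auto intro!: continuous_intros)
  then obtain r where r: "r > 0"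
    and near: "\<And>z. dist z \<zeta> < r \<Longrightarrow> dist (Re (cnj (\<phi> z) * deriv \<phi> \<zeta> * z)) \<kappa> < \<kappa> / 2"
    using angular_derivative_pos unfolding continuous_at_eps_delta \<kappa>_def by (metis half_gt_zero)
  have "\<kappa> / 2 < Re (cnj (\<phi> z) * deriv \<phi> \<zeta> * z)" if "dist z \<zeta> < r" for z
    using near[OF that] unfolding dist_real_def abs_less_iff by linarith
  with r show ?thesis
    unfolding \<kappa>_def by (rule that)
qed

text \<open>Since \<open>\<phi> (rho s)\<close> lies on the circle, the defect \<open>1 - |\<phi> (sgn s)|\<close> is controlled by
  \<open>|rho s - sgn s| = 1 / |s| - 1\<close>; the lower bound is where the positivity of the angular
  derivative enters.\<close>

lemma radial_defect_comparable:
  obtains r k L where "r > 0" "k > 0" "L > 0"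
    "\<And>s. norm s < 1 \<Longrightarrow> norm (s - \<zeta>) < r \<Longrightarrow> norm (\<phi> (rho s)) = 1 \<Longrightarrow>
       k * (1 / norm s - 1) \<le> 1 - norm (\<phi> (sgn s)) \<and> 1 - norm (\<phi> (sgn s)) \<le> L * (1 / norm s - 1)"
proof -
  define D where "D = deriv \<phi> \<zeta>"
  define \<kappa> where "\<kappa> = Re (cnj (\<phi> \<zeta>) * D * \<zeta>)"
  have "\<kappa> / 4 > 0"
    using angular_derivative_pos by (simp add: \<kappa>_def D_def)
  then obtain r1 where r1: "r1 > 0" "ball \<zeta> r1 \<subseteq> S"
    and approx: "\<And>x y. x \<in> ball \<zeta> r1 \<Longrightarrow> y \<in> ball \<zeta> r1 \<Longrightarrow>
       norm (\<phi> x - \<phi> y - D * (x - y)) \<le> \<kappa> / 4 * norm (x - y)"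
    using holomorphic_deriv_approx[OF holo open_S in_S] unfolding D_def by blast
  obtain r2 L where r2: "r2 > 0" "L > 0" "ball \<zeta> r2 \<subseteq> S"
    and lip: "\<And>x y. x \<in> ball \<zeta> r2 \<Longrightarrow> y \<in> ball \<zeta> r2 \<Longrightarrow> norm (\<phi> x - \<phi> y) \<le> L * norm (x - y)"
    using holomorphic_locally_lipschitz[OF holo open_S in_S] by blast
  obtain r3 where r3: "r3 > 0"
    and angle: "\<And>z. dist z \<zeta> < r3 \<Longrightarrow> \<kappa> / 2 < Re (cnj (\<phi> z) * D * z)"
    using angular_derivative_near unfolding \<kappa>_def D_def by blast
  define r where "r = min (min (min r1 r2) r3 / 4) (1 / 2)"
  have "\<kappa> / 4 * t \<le> 1 - norm (\<phi> v) \<and> 1 - norm (\<phi> v) \<le> L * t"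
    if s: "norm s < 1" "norm (s - \<zeta>) < r" "norm (\<phi> (rho s)) = 1"
      and t: "t = 1 / norm s - 1" and v: "v = sgn s" for s t v
  proof -
    have s2: "1 / 2 < norm s"
      using s norm_triangle_ineq2[of \<zeta> s] on_circle(1) by (simp add: r_def norm_minus_commute)
    note radial = radial_projection[OF s2 s(1), folded t v]
      radial_projection_dist[OF on_circle(1) s2 s(1), folded t v]
    have v1: "norm v = 1"
      using s2 by (auto simp: v norm_sgn)
    have "4 * norm (s - \<zeta>) < min (min r1 r2) r3"
      using s(2) by (simp add: r_def)
    then have "norm (v - \<zeta>) < min (min r1 r2) r3" "norm (rho s - \<zeta>) < min r1 r2"
      using radial(6,8) norm_ge_zero[of "s - \<zeta>"] by linarith+
    then have near: "v \<in> ball \<zeta> r1" "v \<in> ball \<zeta> r2" "dist v \<zeta> < r3"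
      "rho s \<in> ball \<zeta> r1" "rho s \<in> ball \<zeta> r2"
      by (auto simp: dist_norm norm_minus_commute)
    have "norm (\<phi> (rho s) - \<phi> v - of_real t * (D * v)) \<le> \<kappa> / 4 * t"
      using approx[OF near(4,1)] radial(1,2) v1 by (simp add: norm_mult mult.left_commute)
    then have growth: "t * (Re (cnj (\<phi> v) * (D * v)) - \<kappa> / 4) \<le> 1 - norm (\<phi> v)"
      using s(3) norm_le_1_on_cball[of v] v1 radial(2) by (intro Re_cnj_growth_bound) auto
    have "\<kappa> / 4 \<le> Re (cnj (\<phi> v) * (D * v)) - \<kappa> / 4"
      using angle[OF near(3)] unfolding mult.assoc by linarith
    then have lower: "\<kappa> / 4 * t \<le> (Re (cnj (\<phi> v) * (D * v)) - \<kappa> / 4) * t"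
      using radial(2) by (intro mult_right_mono) auto
    have upper: "norm (\<phi> (rho s) - \<phi> v) \<le> L * t"
      using lip[OF near(5,2)] radial(1,2) v1 by (simp add: norm_mult)
    show ?thesis
      using growth lower upper norm_triangle_ineq2[of "\<phi> (rho s)" "\<phi> v"] s(3)
      by (simp add: mult.commute)
  qed
  then show ?thesis
    using r1 r2 r3 \<open>\<kappa> / 4 > 0\<close> by (intro that[of r "\<kappa> / 4" L]) (auto simp: r_def)
qed

end

locale reflected_branch_contact = reflected_branch +
  fixes n :: nat and A B \<delta> :: real
  assumes contact_pos: "0 < \<delta>" "0 < A" "0 < B"
    and contact_AE: "AE \<theta> in lborel. dist (cis \<theta>) \<zeta> < \<delta> \<longrightarrow>
           A \<le> (1 - (norm (\<phi> (cis \<theta>)))\<^sup>2) / (norm (\<phi> \<zeta> - \<phi> (cis \<theta>))) powr n \<and>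
           (1 - (norm (\<phi> (cis \<theta>)))\<^sup>2) / (norm (\<phi> \<zeta> - \<phi> (cis \<theta>))) powr n \<le> B"
begin

lemma contact_on_circle:
  obtains r where "r > 0"
    "\<And>v. norm v = 1 \<Longrightarrow> norm (v - \<zeta>) < r \<Longrightarrow> v \<noteq> \<zeta> \<Longrightarrow>
       A \<le> (1 - (norm (\<phi> v))\<^sup>2) / (norm (\<phi> \<zeta> - \<phi> v)) powr n \<and>
       (1 - (norm (\<phi> v))\<^sup>2) / (norm (\<phi> \<zeta> - \<phi> v)) powr n \<le> B"
proof -
  obtain r0 c where r0: "r0 > 0" "c > 0" "ball \<zeta> r0 \<subseteq> S"
    and expand: "\<And>x. x \<in> ball \<zeta> r0 \<Longrightarrow> c * norm (x - \<zeta>) \<le> norm (\<phi> x - \<phi> \<zeta>)"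
    using holomorphic_locally_expanding[OF holo open_S in_S deriv_nonzero] by blast
  define R where "R \<theta> = (1 - (norm (\<phi> (cis \<theta>)))\<^sup>2) / (norm (\<phi> \<zeta> - \<phi> (cis \<theta>))) powr n" for \<theta>
  have "A \<le> (1 - (norm (\<phi> v))\<^sup>2) / (norm (\<phi> \<zeta> - \<phi> v)) powr n \<and>
        (1 - (norm (\<phi> v))\<^sup>2) / (norm (\<phi> \<zeta> - \<phi> v)) powr n \<le> B"
    if v: "norm v = 1" "norm (v - \<zeta>) < min r0 \<delta>" "v \<noteq> \<zeta>" for v
  proof -
    have "v \<noteq> 0"
      using v(1) by auto
    then have cis: "cis (Arg v) = v"
      using v(1) cis_Arg[of v] by (simp add: sgn_div_norm)
    have "R (Arg v) \<in> {A..B}"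
    proof (rule AE_lborel_continuous_imp_mem_closed[where P = "\<lambda>\<theta>. dist (cis \<theta>) \<zeta> < \<delta>" and g = R])
      have vS: "v \<in> ball \<zeta> r0"
        using v by (simp add: dist_norm norm_minus_commute)
      have "0 < c * norm (v - \<zeta>)"
        using r0(2) v(3) by simp
      then have "\<phi> \<zeta> - \<phi> v \<noteq> 0"
        using expand[OF vS] by auto
      have "continuous_on UNIV cis"
        by (intro continuous_intros)
      then have cis_cont: "isCont cis (Arg v)"
        by (simp add: continuous_on_eq_continuous_at)
      have "isCont \<phi> v"
        using vS r0(3) holomorphic_on_imp_continuous_on[OF holo] open_S
        by (meson continuous_on_eq_continuous_at subsetD)
      then have "isCont (\<lambda>\<theta>. \<phi> (cis \<theta>)) (Arg v)"
        using isCont_o2[OF cis_cont] cis by simp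
      then have "isCont (\<lambda>\<theta>. norm (\<phi> \<zeta> - \<phi> (cis \<theta>)) powr n) (Arg v)"
           "isCont (\<lambda>\<theta>. 1 - (norm (\<phi> (cis \<theta>)))\<^sup>2) (Arg v)"
        using \<open>\<phi> \<zeta> - \<phi> v \<noteq> 0\<close> cis
        by (auto intro!: continuous_intros)
      then show "isCont R (Arg v)"
        unfolding R_def using \<open>\<phi> \<zeta> - \<phi> v \<noteq> 0\<close> cis by (intro continuous_divide) auto
      have "isCont (\<lambda>\<theta>. dist (cis \<theta>) \<zeta>) (Arg v)"
        using cis_cont by (intro continuous_intros)
      then show "eventually (\<lambda>\<theta>. dist (cis \<theta>) \<zeta> < \<delta>) (at (Arg v))"
        using v(2) cis unfolding isCont_def by (intro order_tendstoD(2)) (auto simp: dist_norm)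
    qed (use contact_AE in \<open>auto simp: R_def\<close>)
    with cis show ?thesis
      by (simp add: R_def)
  qed
  then show ?thesis
    using r0 contact_pos by (intro that[of "min r0 \<delta>"]) auto
qed

lemma contact_exponent_pos: "n \<ge> 1"
proof (rule ccontr)
  assume "\<not> n \<ge> 1"
  then have n0: "n = 0"
    by simp
  obtain r where r: "r > 0"
    and bounds: "\<And>v. norm v = 1 \<Longrightarrow> norm (v - \<zeta>) < r \<Longrightarrow> v \<noteq> \<zeta> \<Longrightarrow>
       A \<le> (1 - (norm (\<phi> v))\<^sup>2) / (norm (\<phi> \<zeta> - \<phi> v)) powr n \<and>
       (1 - (norm (\<phi> v))\<^sup>2) / (norm (\<phi> \<zeta> - \<phi> v)) powr n \<le> B"
    using contact_on_circle by blast
  obtain r1 L where r1: "r1 > 0" "L > 0" "ball \<zeta> r1 \<subseteq> S"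
    and lip: "\<And>x y. x \<in> ball \<zeta> r1 \<Longrightarrow> y \<in> ball \<zeta> r1 \<Longrightarrow> norm (\<phi> x - \<phi> y) \<le> L * norm (x - y)"
    using holomorphic_locally_lipschitz[OF holo open_S in_S] by blast
  have "0 < min (min r r1) (A / (2 * L))"
    using r r1 contact_pos by simp
  then obtain v where v: "norm v = 1" "v \<noteq> \<zeta>" "norm (v - \<zeta>) < min (min r r1) (A / (2 * L))"
    using exists_circle_point_near[OF on_circle(1)] by blast
  have vb: "v \<in> ball \<zeta> r1"
    using v by (simp add: dist_norm norm_minus_commute)
  have "A \<le> 1 - (norm (\<phi> v))\<^sup>2"
    using conjunct1[OF bounds[OF v(1) _ v(2)]] v(3) n0 contact_pos by (auto split: if_splits)
  also have "\<dots> \<le> 2 * (1 - norm (\<phi> v))"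
    using one_minus_square_bounds(2) norm_le_1_on_cball[of v] v(1) by simp
  also have "\<dots> \<le> 2 * norm (\<phi> v - \<phi> \<zeta>)"
    using norm_triangle_ineq2[of "\<phi> \<zeta>" "\<phi> v"] on_circle(2) by (simp add: norm_minus_commute)
  also have "\<dots> \<le> 2 * (L * norm (v - \<zeta>))"
    using lip[OF vb, of \<zeta>] r1(1) by simp
  also have "\<dots> < 2 * (L * (A / (2 * L)))"
    using v(3) r1(2) mult_strict_left_mono[of "norm (v - \<zeta>)" "A / (2 * L)" L] by simp
  finally show False
    using r1(2) by simp
qed

lemma contact_power_bounds:
  obtains r where "r > 0"
    "\<And>v. norm v = 1 \<Longrightarrow> norm (v - \<zeta>) < r \<Longrightarrow>
       A * norm (\<phi> \<zeta> - \<phi> v) ^ n \<le> 1 - (norm (\<phi> v))\<^sup>2 \<and>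
       1 - (norm (\<phi> v))\<^sup>2 \<le> B * norm (\<phi> \<zeta> - \<phi> v) ^ n"
proof -
  obtain r where r: "r > 0"
    and bounds: "\<And>v. norm v = 1 \<Longrightarrow> norm (v - \<zeta>) < r \<Longrightarrow> v \<noteq> \<zeta> \<Longrightarrow>
       A \<le> (1 - (norm (\<phi> v))\<^sup>2) / (norm (\<phi> \<zeta> - \<phi> v)) powr n \<and>
       (1 - (norm (\<phi> v))\<^sup>2) / (norm (\<phi> \<zeta> - \<phi> v)) powr n \<le> B"
    using contact_on_circle by blast
  obtain r0 c where r0: "r0 > 0" "c > 0" "ball \<zeta> r0 \<subseteq> S"
    and expand: "\<And>x. x \<in> ball \<zeta> r0 \<Longrightarrow> c * norm (x - \<zeta>) \<le> norm (\<phi> x - \<phi> \<zeta>)"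
    using holomorphic_locally_expanding[OF holo open_S in_S deriv_nonzero] by blast
  have "A * norm (\<phi> \<zeta> - \<phi> v) ^ n \<le> 1 - (norm (\<phi> v))\<^sup>2 \<and>
        1 - (norm (\<phi> v))\<^sup>2 \<le> B * norm (\<phi> \<zeta> - \<phi> v) ^ n"
    if v: "norm v = 1" "norm (v - \<zeta>) < min r r0" for v
  proof (cases "v = \<zeta>")
    case True
    have "n \<noteq> 0"
      using contact_exponent_pos by simp
    with True show ?thesis
      using on_circle by (simp add: power_0_left)
  next
    case False
    then have "0 < c * norm (v - \<zeta>)"
      using r0 by simp
    also have "\<dots> \<le> norm (\<phi> \<zeta> - \<phi> v)"
      using expand[of v] v by (simp add: dist_norm norm_minus_commute)
    finally have "0 < norm (\<phi> \<zeta> - \<phi> v)" .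
    then have "0 < norm (\<phi> \<zeta> - \<phi> v) ^ n"
      by simp
    moreover have "norm (\<phi> \<zeta> - \<phi> v) powr n = norm (\<phi> \<zeta> - \<phi> v) ^ n"
      using \<open>0 < norm (\<phi> \<zeta> - \<phi> v)\<close> by (simp add: powr_realpow)
    ultimately show ?thesis
      using bounds[OF v(1) _ False] v by (simp add: pos_le_divide_eq pos_divide_le_eq)
  qed
  then show ?thesis
    using r r0 by (intro that[of "min r r0"]) auto
qed

lemma contact_dist_bounds:
  obtains r a b where "r > 0" "a > 0" "b > 0"
    "\<And>v. norm v = 1 \<Longrightarrow> norm (v - \<zeta>) < r \<Longrightarrow>
       a * norm (v - \<zeta>) ^ n \<le> 1 - (norm (\<phi> v))\<^sup>2 \<and> 1 - (norm (\<phi> v))\<^sup>2 \<le> b * norm (v - \<zeta>) ^ n"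
proof -
  obtain r where r: "r > 0"
    and bounds: "\<And>v. norm v = 1 \<Longrightarrow> norm (v - \<zeta>) < r \<Longrightarrow>
       A * norm (\<phi> \<zeta> - \<phi> v) ^ n \<le> 1 - (norm (\<phi> v))\<^sup>2 \<and>
       1 - (norm (\<phi> v))\<^sup>2 \<le> B * norm (\<phi> \<zeta> - \<phi> v) ^ n"
    using contact_power_bounds by blast
  obtain r1 L where r1: "r1 > 0" "L > 0" "ball \<zeta> r1 \<subseteq> S"
    and lip: "\<And>x y. x \<in> ball \<zeta> r1 \<Longrightarrow> y \<in> ball \<zeta> r1 \<Longrightarrow> norm (\<phi> x - \<phi> y) \<le> L * norm (x - y)"
    using holomorphic_locally_lipschitz[OF holo open_S in_S] by blast
  obtain r2 c where r2: "r2 > 0" "c > 0" "ball \<zeta> r2 \<subseteq> S"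
    and expand: "\<And>x. x \<in> ball \<zeta> r2 \<Longrightarrow> c * norm (x - \<zeta>) \<le> norm (\<phi> x - \<phi> \<zeta>)"
    using holomorphic_locally_expanding[OF holo open_S in_S deriv_nonzero] by blast
  have "A * c ^ n * norm (v - \<zeta>) ^ n \<le> 1 - (norm (\<phi> v))\<^sup>2 \<and>
        1 - (norm (\<phi> v))\<^sup>2 \<le> B * L ^ n * norm (v - \<zeta>) ^ n"
    if v: "norm v = 1" "norm (v - \<zeta>) < min r (min r1 r2)" for v
  proof -
    have vb: "v \<in> ball \<zeta> r1" "v \<in> ball \<zeta> r2"
      using v(2) by (auto simp: dist_norm norm_minus_commute)
    have "A * (c * norm (v - \<zeta>)) ^ n \<le> A * norm (\<phi> \<zeta> - \<phi> v) ^ n"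
      using expand[OF vb(2)] r2(2) contact_pos
      by (intro mult_left_mono power_mono) (auto simp: norm_minus_commute)
    moreover have "B * norm (\<phi> \<zeta> - \<phi> v) ^ n \<le> B * (L * norm (v - \<zeta>)) ^ n"
      using lip[OF vb(1), of \<zeta>] r1(1) contact_pos
      by (intro mult_left_mono power_mono) (auto simp: norm_minus_commute)
    ultimately show ?thesis
      using bounds[OF v(1)] v(2) by (auto simp: power_mult_distrib mult.assoc)
  qed
  then show ?thesis
    using r r1 r2 contact_pos by (intro that[of "min r (min r1 r2)" "A * c ^ n" "B * L ^ n"]) auto
qed

lemma circle_maps_inside:
  obtains r where "r > 0" "\<And>v. norm v = 1 \<Longrightarrow> norm (v - \<zeta>) < r \<Longrightarrow> v \<noteq> \<zeta> \<Longrightarrow> norm (\<phi> v) < 1"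
proof -
  obtain r a b where r: "r > 0" "a > 0" "b > 0"
    and bounds: "\<And>v. norm v = 1 \<Longrightarrow> norm (v - \<zeta>) < r \<Longrightarrow>
       a * norm (v - \<zeta>) ^ n \<le> 1 - (norm (\<phi> v))\<^sup>2 \<and> 1 - (norm (\<phi> v))\<^sup>2 \<le> b * norm (v - \<zeta>) ^ n"
    using contact_dist_bounds by blast
  have "norm (\<phi> v) < 1" if v: "norm v = 1" "norm (v - \<zeta>) < r" "v \<noteq> \<zeta>" for v
  proof -
    have "0 < a * norm (v - \<zeta>) ^ n"
      using r(2) v(3) by simp
    then have "(norm (\<phi> v))\<^sup>2 < 1\<^sup>2"
      using bounds[OF v(1,2)] by simp
    then show ?thesis
      by (rule power_less_imp_less_base) simp
  qed
  with r(1) show ?thesis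
    by (rule that)
qed

lemma lower_contact_bound:
  obtains r K where "r > 0" "K > 0"
    "\<And>s. norm s < 1 \<Longrightarrow> norm (s - \<zeta>) < r \<Longrightarrow> norm (\<phi> (rho s)) = 1 \<Longrightarrow>
       norm (s - \<zeta>) ^ n \<le> K * (1 - (norm s)\<^sup>2)"
proof -
  obtain r1 k L where r1: "r1 > 0" "k > 0" "L > 0"
    and defect: "\<And>s. norm s < 1 \<Longrightarrow> norm (s - \<zeta>) < r1 \<Longrightarrow> norm (\<phi> (rho s)) = 1 \<Longrightarrow>
       k * (1 / norm s - 1) \<le> 1 - norm (\<phi> (sgn s)) \<and> 1 - norm (\<phi> (sgn s)) \<le> L * (1 / norm s - 1)"
    using radial_defect_comparable by blast
  obtain r2 a b where r2: "r2 > 0" "a > 0" "b > 0"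
    and contact: "\<And>v. norm v = 1 \<Longrightarrow> norm (v - \<zeta>) < r2 \<Longrightarrow>
       a * norm (v - \<zeta>) ^ n \<le> 1 - (norm (\<phi> v))\<^sup>2 \<and> 1 - (norm (\<phi> v))\<^sup>2 \<le> b * norm (v - \<zeta>) ^ n"
    using contact_dist_bounds by blast
  define K where "K = 2 * L / a"
  have K: "K > 0"
    using r1(3) r2(2) by (simp add: K_def)
  define r where "r = min (min r1 (r2 / 2)) (1 / 2)"
  have "norm (s - \<zeta>) ^ n \<le> 2 ^ (n + 1) * (K + 1) * (1 - (norm s)\<^sup>2)"
    if s: "norm s < 1" "norm (s - \<zeta>) < r" "norm (\<phi> (rho s)) = 1" for s
  proof -
    have s2: "1 / 2 < norm s"
      using s norm_triangle_ineq2[of \<zeta> s] on_circle(1) by (simp add: r_def norm_minus_commute)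
    define t where "t = 1 / norm s - 1"
    define v where "v = sgn s"
    note radial = radial_projection[OF s2 s(1), folded t_def v_def]
      radial_projection_dist[OF on_circle(1) s2 s(1), folded t_def v_def]
    have v1: "norm v = 1"
      using s2 by (auto simp: v_def norm_sgn)
    have "norm (v - \<zeta>) < r2" "norm (s - \<zeta>) < r1"
      using radial(6) s(2) by (auto simp: r_def)
    then have "a * norm (v - \<zeta>) ^ n \<le> 1 - (norm (\<phi> v))\<^sup>2"
      using contact[OF v1] by blast
    also have "\<dots> \<le> 2 * (1 - norm (\<phi> v))"
      using one_minus_square_bounds(2) norm_le_1_on_cball[of v] v1 by simp
    also have "\<dots> \<le> 2 * (L * t)"
      using defect[OF s(1) \<open>norm (s - \<zeta>) < r1\<close> s(3)] by (simp add: t_def v_def)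
    finally have "norm (v - \<zeta>) ^ n \<le> K * t"
      using r2(2) by (simp add: K_def field_simps)
    then have "norm (s - \<zeta>) ^ n \<le> 2 ^ n * (K + 1) * t"
      using radial contact_exponent_pos by (intro power_le_of_le_add) auto
    also have "\<dots> \<le> 2 ^ n * (K + 1) * (2 * (1 - (norm s)\<^sup>2))"
      using radial K by (intro mult_left_mono) auto
    finally show ?thesis
      by (simp add: algebra_simps)
  qed
  then show ?thesis
    using r1 r2 K by (intro that[of r "2 ^ (n + 1) * (K + 1)"]) (auto simp: r_def)
qed

lemma upper_contact_bound:
  obtains r K where "r > 0" "K > 0"
    "\<And>s. norm s < 1 \<Longrightarrow> norm (s - \<zeta>) < r \<Longrightarrow> norm (\<phi> (rho s)) = 1 \<Longrightarrow>
       1 - (norm s)\<^sup>2 \<le> K * norm (s - \<zeta>) ^ n"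
proof -
  obtain r1 k L where r1: "r1 > 0" "k > 0" "L > 0"
    and defect: "\<And>s. norm s < 1 \<Longrightarrow> norm (s - \<zeta>) < r1 \<Longrightarrow> norm (\<phi> (rho s)) = 1 \<Longrightarrow>
       k * (1 / norm s - 1) \<le> 1 - norm (\<phi> (sgn s)) \<and> 1 - norm (\<phi> (sgn s)) \<le> L * (1 / norm s - 1)"
    using radial_defect_comparable by blast
  obtain r2 a b where r2: "r2 > 0" "a > 0" "b > 0"
    and contact: "\<And>v. norm v = 1 \<Longrightarrow> norm (v - \<zeta>) < r2 \<Longrightarrow>
       a * norm (v - \<zeta>) ^ n \<le> 1 - (norm (\<phi> v))\<^sup>2 \<and> 1 - (norm (\<phi> v))\<^sup>2 \<le> b * norm (v - \<zeta>) ^ n"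
    using contact_dist_bounds by blast
  define K where "K = 2 * b * 2 ^ n / k"
  define r where "r = min (min r1 (r2 / 2)) (1 / 2)"
  have "1 - (norm s)\<^sup>2 \<le> K * norm (s - \<zeta>) ^ n"
    if s: "norm s < 1" "norm (s - \<zeta>) < r" "norm (\<phi> (rho s)) = 1" for s
  proof -
    have s2: "1 / 2 < norm s"
      using s norm_triangle_ineq2[of \<zeta> s] on_circle(1) by (simp add: r_def norm_minus_commute)
    define t where "t = 1 / norm s - 1"
    define v where "v = sgn s"
    note radial = radial_projection[OF s2 s(1), folded t_def v_def]
      radial_projection_dist[OF on_circle(1) s2 s(1), folded t_def v_def]
    have v1: "norm v = 1"
      using s2 by (auto simp: v_def norm_sgn)
    have "norm (v - \<zeta>) < r2" "norm (s - \<zeta>) < r1"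
      using radial(6) s(2) by (auto simp: r_def)
    have "k * t \<le> 1 - norm (\<phi> v)"
      using defect[OF s(1) \<open>norm (s - \<zeta>) < r1\<close> s(3)] by (simp add: t_def v_def)
    also have "\<dots> \<le> 1 - (norm (\<phi> v))\<^sup>2"
      using one_minus_square_bounds(1) norm_le_1_on_cball[of v] v1 by simp
    also have "\<dots> \<le> b * norm (v - \<zeta>) ^ n"
      using contact[OF v1 \<open>norm (v - \<zeta>) < r2\<close>] by blast
    also have "\<dots> \<le> b * (2 * norm (s - \<zeta>)) ^ n"
      using radial(6) r2(3) by (intro mult_left_mono power_mono) auto
    finally have kt: "k * t \<le> b * 2 ^ n * norm (s - \<zeta>) ^ n"
      by (simp add: power_mult_distrib mult.assoc)
    have "1 - (norm s)\<^sup>2 \<le> 2 * t"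
      by (rule radial(5))
    also have "\<dots> \<le> 2 * (b * 2 ^ n * norm (s - \<zeta>) ^ n / k)"
      using kt r1(2) by (simp add: pos_le_divide_eq mult.commute)
    also have "\<dots> = K * norm (s - \<zeta>) ^ n"
      by (simp add: K_def field_simps)
    finally show ?thesis .
  qed
  then show ?thesis
    using r1 r2 by (intro that[of r K]) (auto simp: r_def K_def)
qed

lemma contact_ratio_bounds:
  obtains r A' B' where "r > 0" "A' > 0" "B' > 0"
    "\<And>s. norm s < 1 \<Longrightarrow> norm (s - \<zeta>) < r \<Longrightarrow> norm (\<phi> (rho s)) = 1 \<Longrightarrow>
       A' \<le> (1 - (norm s)\<^sup>2) / norm (\<zeta> - s) powr n \<and> (1 - (norm s)\<^sup>2) / norm (\<zeta> - s) powr n \<le> B'"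
proof -
  obtain r1 K1 where r1: "r1 > 0" "K1 > 0"
    and lower: "\<And>s. norm s < 1 \<Longrightarrow> norm (s - \<zeta>) < r1 \<Longrightarrow> norm (\<phi> (rho s)) = 1 \<Longrightarrow>
       norm (s - \<zeta>) ^ n \<le> K1 * (1 - (norm s)\<^sup>2)"
    using lower_contact_bound by blast
  obtain r2 K2 where r2: "r2 > 0" "K2 > 0"
    and upper: "\<And>s. norm s < 1 \<Longrightarrow> norm (s - \<zeta>) < r2 \<Longrightarrow> norm (\<phi> (rho s)) = 1 \<Longrightarrow>
       1 - (norm s)\<^sup>2 \<le> K2 * norm (s - \<zeta>) ^ n"
    using upper_contact_bound by blast
  have "1 / K1 \<le> (1 - (norm s)\<^sup>2) / norm (\<zeta> - s) powr n \<and> (1 - (norm s)\<^sup>2) / norm (\<zeta> - s) powr n \<le> K2"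
    if s: "norm s < 1" "norm (s - \<zeta>) < min r1 r2" "norm (\<phi> (rho s)) = 1" for s
  proof -
    have "s \<noteq> \<zeta>"
      using s(1) on_circle(1) by auto
    then have "norm (\<zeta> - s) > 0"
      by simp
    then have "norm (\<zeta> - s) powr n = norm (\<zeta> - s) ^ n" and pos: "norm (\<zeta> - s) ^ n > 0"
      by (simp_all add: powr_realpow)
    then show ?thesis
      using lower[OF s(1) _ s(3)] upper[OF s(1) _ s(3)] s(2) pos r1(2)
      by (simp add: norm_minus_commute field_simps)
  qed
  then show ?thesis
    using r1 r2 by (intro that[of "min r1 r2" "1 / K1" K2]) auto
qed

lemma branch_maps_into_disc:
  obtains r where "r > 0" "ball (\<phi> \<zeta>) r \<subseteq> U"
    "\<And>w. w \<in> ball (\<phi> \<zeta>) r \<Longrightarrow> norm w \<le> 1 \<Longrightarrow> w \<noteq> \<phi> \<zeta> \<Longrightarrow> norm (\<sigma> w) < 1"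
proof -
  obtain r0 where r0: "r0 > 0"
    and inside: "\<And>v. norm v = 1 \<Longrightarrow> norm (v - \<zeta>) < r0 \<Longrightarrow> v \<noteq> \<zeta> \<Longrightarrow> norm (\<phi> v) < 1"
    using circle_maps_inside by blast
  obtain r where r: "r > 0" "r \<le> 1" "ball (\<phi> \<zeta>) r \<subseteq> U"
    and near: "\<And>w. w \<in> ball (\<phi> \<zeta>) r \<Longrightarrow> norm (\<sigma> w - \<zeta>) < r0"
    using branch_near[OF r0] by blast
  have "norm (\<sigma> w) < 1" if w: "w \<in> ball (\<phi> \<zeta>) r" "norm w \<le> 1" "w \<noteq> \<phi> \<zeta>" for w
  proof (rule ccontr)
    define s where "s = \<sigma> w"
    assume "\<not> norm (\<sigma> w) < 1"
    then have s1: "norm s \<ge> 1"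
      by (simp add: s_def)
    have "w \<noteq> 0"
      using w(1) r(2) on_circle(2) by auto
    then have rho_w: "norm (rho w) \<ge> 1"
      using w(2) by (simp add: norm_rho field_simps)
    have img: "\<phi> (rho s) = rho w"
      using branch_inverse w(1) r(3) by (auto simp: s_def)
    have s_circle: "norm s = 1"
    proof (rule ccontr)
      assume "norm s \<noteq> 1"
      then have "1 < norm s"
        using s1 by simp
      then have "rho s \<in> ball 0 1"
        by (simp add: norm_rho divide_less_eq)
      then have "norm (\<phi> (rho s)) < 1"
        using maps_disc by (auto simp: image_subset_iff)
      with img rho_w show False
        by simp
    qed
    then have "\<phi> s = rho w"
      using img rho_eq_self_on_circle by simp
    then have "s = \<zeta>"
      using inside[OF s_circle] near[OF w(1)] rho_w by (force simp: s_def)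
    then have "rho w = \<phi> \<zeta>"
      using \<open>\<phi> s = rho w\<close> by simp
    then have "w = \<phi> \<zeta>"
      using rho_eq_self_on_circle[OF on_circle(2)] by (metis rho_rho)
    with w(3) show False
      by simp
  qed
  then show ?thesis
    using r by (intro that[of r]) auto
qed

lemma branch_ratio_bounds:
  obtains r A' B' where "r > 0" "A' > 0" "B' > 0" "ball (\<phi> \<zeta>) r \<subseteq> U"
    "\<And>w. w \<in> ball (\<phi> \<zeta>) r \<Longrightarrow> norm w \<le> 1 \<Longrightarrow> w \<noteq> \<phi> \<zeta> \<Longrightarrow> norm (\<sigma> w) < 1"
    "\<And>w. norm w = 1 \<Longrightarrow> w \<in> ball (\<phi> \<zeta>) r \<Longrightarrow> w \<noteq> \<phi> \<zeta> \<Longrightarrow>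
       A' \<le> (1 - (norm (\<sigma> w))\<^sup>2) / norm (\<sigma> (\<phi> \<zeta>) - \<sigma> w) powr n \<and>
       (1 - (norm (\<sigma> w))\<^sup>2) / norm (\<sigma> (\<phi> \<zeta>) - \<sigma> w) powr n \<le> B'"
proof -
  obtain \<rho> A' B' where \<rho>: "\<rho> > 0" "A' > 0" "B' > 0"
    and ratio: "\<And>s. norm s < 1 \<Longrightarrow> norm (s - \<zeta>) < \<rho> \<Longrightarrow> norm (\<phi> (rho s)) = 1 \<Longrightarrow>
       A' \<le> (1 - (norm s)\<^sup>2) / norm (\<zeta> - s) powr n \<and> (1 - (norm s)\<^sup>2) / norm (\<zeta> - s) powr n \<le> B'"
    using contact_ratio_bounds by blast
  obtain r1 where r1: "r1 > 0" "ball (\<phi> \<zeta>) r1 \<subseteq> U"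
    and into: "\<And>w. w \<in> ball (\<phi> \<zeta>) r1 \<Longrightarrow> norm w \<le> 1 \<Longrightarrow> w \<noteq> \<phi> \<zeta> \<Longrightarrow> norm (\<sigma> w) < 1"
    using branch_maps_into_disc by blast
  obtain r2 where r2: "r2 > 0" "r2 \<le> 1" "ball (\<phi> \<zeta>) r2 \<subseteq> U"
    and near: "\<And>w. w \<in> ball (\<phi> \<zeta>) r2 \<Longrightarrow> norm (\<sigma> w - \<zeta>) < \<rho>"
    using branch_near[OF \<rho>(1)] by blast
  define r where "r = min r1 r2"
  have "A' \<le> (1 - (norm (\<sigma> w))\<^sup>2) / norm (\<sigma> (\<phi> \<zeta>) - \<sigma> w) powr n \<and>
        (1 - (norm (\<sigma> w))\<^sup>2) / norm (\<sigma> (\<phi> \<zeta>) - \<sigma> w) powr n \<le> B'"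
    if w: "norm w = 1" "w \<in> ball (\<phi> \<zeta>) r" "w \<noteq> \<phi> \<zeta>" for w
  proof -
    have wb: "w \<in> ball (\<phi> \<zeta>) r1" "w \<in> ball (\<phi> \<zeta>) r2"
      using w(2) by (auto simp: r_def)
    have "\<phi> (rho (\<sigma> w)) = w"
      using branch_inverse[of w] wb r1(2) rho_eq_self_on_circle[OF w(1)] by auto
    then show ?thesis
      using ratio[of "\<sigma> w"] into[OF wb(1)] near[OF wb(2)] w branch_at by auto
  qed
  then show ?thesis
    using r1 r2 \<rho> into by (intro that[of r A' B']) (auto simp: r_def)
qed

lemma branch_order_of_contact: "order_of_contact \<sigma> (\<phi> \<zeta>) n"
proof -
  obtain r A' B' where r: "r > 0" "A' > 0" "B' > 0" "ball (\<phi> \<zeta>) r \<subseteq> U"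
    and into: "\<And>w. w \<in> ball (\<phi> \<zeta>) r \<Longrightarrow> norm w \<le> 1 \<Longrightarrow> w \<noteq> \<phi> \<zeta> \<Longrightarrow> norm (\<sigma> w) < 1"
    and bounds: "\<And>w. norm w = 1 \<Longrightarrow> w \<in> ball (\<phi> \<zeta>) r \<Longrightarrow> w \<noteq> \<phi> \<zeta> \<Longrightarrow>
       A' \<le> (1 - (norm (\<sigma> w))\<^sup>2) / norm (\<sigma> (\<phi> \<zeta>) - \<sigma> w) powr n \<and>
       (1 - (norm (\<sigma> w))\<^sup>2) / norm (\<sigma> (\<phi> \<zeta>) - \<sigma> w) powr n \<le> B'"
    using branch_ratio_bounds by blast
  have AE: "AE \<theta> in lborel. dist (cis \<theta>) (\<phi> \<zeta>) < r \<longrightarrow>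
      A' \<le> (1 - (norm (\<sigma> (cis \<theta>)))\<^sup>2) / norm (\<sigma> (\<phi> \<zeta>) - \<sigma> (cis \<theta>)) powr n \<and>
      (1 - (norm (\<sigma> (cis \<theta>)))\<^sup>2) / norm (\<sigma> (\<phi> \<zeta>) - \<sigma> (cis \<theta>)) powr n \<le> B'"
    using AE_lborel_cis_neq[of "\<phi> \<zeta>"]
  proof eventually_elim
    case (elim \<theta>)
    then show ?case
      using bounds[of "cis \<theta>"] by (simp add: dist_commute)
  qed
  have img: "\<sigma> ` (ball (\<phi> \<zeta>) r \<inter> ball 0 1) \<subseteq> ball 0 1"
    using into on_circle(2) by fastforce
  have hol: "\<sigma> holomorphic_on (ball (\<phi> \<zeta>) r \<inter> ball 0 1)"
    using holomorphic_on_subset[OF branch_holo] r(4) by blast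
  have "isCont \<sigma> (\<phi> \<zeta>)"
    using holomorphic_on_imp_continuous_on[OF branch_holo] open_U in_U continuous_on_eq_continuous_at by blast
  then have lim: "(\<sigma> \<longlongrightarrow> \<sigma> (\<phi> \<zeta>)) (at (\<phi> \<zeta>) within ball 0 1)"
    unfolding isCont_def by (rule tendsto_within_subset) simp
  show ?thesis
    unfolding order_of_contact_def
  proof (intro conjI)
    show "\<exists>V. open V \<and> \<phi> \<zeta> \<in> V \<and> \<sigma> holomorphic_on (V \<inter> ball 0 1) \<and> \<sigma> ` (V \<inter> ball 0 1) \<subseteq> ball 0 1"
      using r hol img by (intro exI[of _ "ball (\<phi> \<zeta>) r"]) auto
    show "\<exists>\<delta> A B. 0 < \<delta> \<and> 0 < A \<and> 0 < B \<and>
        (AE \<theta> in lborel. dist (cis \<theta>) (\<phi> \<zeta>) < \<delta> \<longrightarrow>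
           A \<le> (1 - (norm (\<sigma> (cis \<theta>)))\<^sup>2) / norm (\<sigma> (\<phi> \<zeta>) - \<sigma> (cis \<theta>)) powr real n \<and>
           (1 - (norm (\<sigma> (cis \<theta>)))\<^sup>2) / norm (\<sigma> (\<phi> \<zeta>) - \<sigma> (cis \<theta>)) powr real n \<le> B)"
      using r AE by blast
  qed (use on_circle branch_at lim in auto)
qed

end

theorem mainTheorem10:
  fixes p q :: "complex poly" and \<zeta> :: complex and n :: nat
    and \<sigma> :: "complex \<Rightarrow> complex" and U :: "complex set"
  assumes "rational_selfmap p q"
    and "even n"
    and "order_of_contact (rat_fun p q) \<zeta> (real n)"
    and "open U" and "rat_fun p q \<zeta> \<in> U"
    and "\<sigma> holomorphic_on U"
    and "\<sigma> (rat_fun p q \<zeta>) = \<zeta>"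
    and "\<forall>w\<in>U. ext_map (rat_fun p q) (\<sigma> w) = w"
  shows "order_of_contact \<sigma> (rat_fun p q \<zeta>) (real n)"
proof -
  define \<phi> where "\<phi> = rat_fun p q"
  define S where "S = {z. poly q z \<noteq> 0}"
  obtain \<delta> A B where contact: "0 < \<delta>" "0 < A" "0 < B"
    "AE \<theta> in lborel. dist (cis \<theta>) \<zeta> < \<delta> \<longrightarrow>
       A \<le> (1 - (norm (\<phi> (cis \<theta>)))\<^sup>2) / (norm (\<phi> \<zeta> - \<phi> (cis \<theta>))) powr n \<and>
       (1 - (norm (\<phi> (cis \<theta>)))\<^sup>2) / (norm (\<phi> \<zeta> - \<phi> (cis \<theta>))) powr n \<le> B"
    using assms(3) unfolding order_of_contact_def \<phi>_def by blast
  interpret reflected_branch_contact \<phi> \<sigma> S U \<zeta> n A B \<delta>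
  proof unfold_locales
    show "\<phi> holomorphic_on S"
      unfolding \<phi>_def S_def rat_fun_def by (intro holomorphic_intros) auto
    show "open S"
      unfolding S_def by (intro open_Collect_neq continuous_intros)
    show "cball 0 1 \<subseteq> S"
      using rational_selfmap_denominator_nonzero[OF assms(1)] by (auto simp: S_def)
    show "\<phi> (rho (\<sigma> w)) = rho w" if "w \<in> U" for w
    proof -
      have "rho (\<phi> (rho (\<sigma> w))) = w"
        using assms(8) that by (simp add: ext_map_def \<phi>_def)
      then show ?thesis
        by (metis rho_rho)
    qed
  qed (use assms contact in \<open>auto simp: \<phi>_def rational_selfmap_def order_of_contact_def\<close>)
  show ?thesis
    using branch_order_of_contact by (simp add: \<phi>_def)
qed

end
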